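(* Let $d \ge 1$ be an integer, let $X_0, X_1, \dots$ be independent random variables each taking the value $1$ with probability $1/4$ and $0$ with probability $3/4$, and let $$P_d = P\Big(\exists N > 0 : \sum_{k=0}^{N-1} X_k < \tfrac{N}{d}\Big).$$ If $d \le 4$ then $P_d = 1$. If $d > 4$ then the polynomial $g_d(z) = z^d - 4z + 3$ has exactly one root in the open unit disk, this root is real and lies in $(3/4,1)$, and $P_d$ equals this root. *)

theory Defs
  imports "HOL-Probability.Probability"
begin

end

theory Submission
  imports Defs
begin

text \<open>With steps \<open>d X\<^sub>k - 1\<close>, the event is that the random walk going up by \<open>d - 1\<close> with
  probability \<open>1/4\<close> and down by \<open>1\<close> otherwise, started at \<open>0\<close>, ever becomes negative.
  Let \<open>F h\<close> be the probability of this from height \<open>h\<close> and \<open>q = F 0\<close>. Since down-steps have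
  size one, to get below \<open>0\<close> from \<open>j + h + 1\<close> the walk must first get down to \<open>h\<close>, so
  \<open>F j * F h \<le> F (j + h + 1)\<close> and hence \<open>q ^ (h + 1) \<le> F h\<close>; the first-step equation
  \<open>q = 3/4 + F (d - 1) / 4\<close> then gives \<open>3/4 + q ^ d / 4 \<le> q\<close>. Conversely, if
  \<open>3/4 + r ^ d / 4 \<le> r\<close> with \<open>r \<ge> 0\<close>, then \<open>r ^ (h + 1)\<close> is a supersolution of the first-step
  recursion, so \<open>q \<le> r\<close>. Thus \<open>q\<close> is the least nonnegative zero of
  \<open>z ^ d - 4 z + 3 = (z - 1) (1 + z + \<dots> + z ^ (d - 1) - 4)\<close>: it is \<open>1\<close> for \<open>d \<le> 4\<close>, and for
  \<open>d > 4\<close> the zero \<open>r \<in> (3/4, 1)\<close> of the increasing second factor. A root \<open>z\<close> in the unit disk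
  has \<open>|z| \<le> r\<close> by the triangle inequality, and then \<open>z ^ d - r ^ d = 4 (z - r)\<close> forces
  \<open>z = r\<close>, because \<open>|z ^ (d - 1) + \<dots> + r ^ (d - 1)| \<le> d r ^ (d - 1) < 4\<close>.\<close>

section \<open>Hitting probabilities of the walk\<close>

definition walk_step :: "nat \<Rightarrow> bool \<Rightarrow> int" where
  "walk_step d b = (if b then int d - 1 else -1)"

definition reaches_negative :: "nat \<Rightarrow> int \<Rightarrow> bool list \<Rightarrow> bool" where
  "reaches_negative d h bs \<longleftrightarrow> (\<exists>N \<le> length bs. h + (\<Sum>k<N. walk_step d (bs ! k)) < 0)"

lemma reaches_negative_Nil [simp]: "reaches_negative d h [] \<longleftrightarrow> h < 0"
  by (simp add: reaches_negative_def)

lemma reaches_negative_Cons [simp]: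
  "reaches_negative d h (b # bs) \<longleftrightarrow> h < 0 \<or> reaches_negative d (h + walk_step d b) bs"
proof -
  have split_first: "(\<exists>N \<le> Suc m. P N) \<longleftrightarrow> P 0 \<or> (\<exists>N \<le> m. P (Suc N))" for P m
    by (metis Suc_le_mono not0_implies_Suc zero_le)
  have "h + (\<Sum>k<Suc N. walk_step d ((b # bs) ! k)) = h + walk_step d b + (\<Sum>k<N. walk_step d (bs ! k))"
    for N by (simp add: sum.lessThan_Suc_shift del: sum.lessThan_Suc)
  then show ?thesis
    unfolding reaches_negative_def length_Cons split_first by (simp add: add.assoc del: sum.lessThan_Suc)
qed

lemma reaches_negative_if_neg: "h < 0 \<Longrightarrow> reaches_negative d h bs"
  by (cases bs) simp_all

fun hit_prob :: "real \<Rightarrow> nat \<Rightarrow> nat \<Rightarrow> int \<Rightarrow> real" where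
  "hit_prob p d 0 h = (if h < 0 then 1 else 0)"
| "hit_prob p d (Suc n) h =
     (if h < 0 then 1 else (1 - p) * hit_prob p d n (h - 1) + p * hit_prob p d n (h + int d - 1))"

lemma hit_prob_neg [simp]: "h < 0 \<Longrightarrow> hit_prob p d n h = 1"
  by (cases n) simp_all

lemma hit_prob_Suc_nonneg:
  "0 \<le> h \<Longrightarrow> hit_prob p d (Suc n) h = (1 - p) * hit_prob p d n (h - 1) + p * hit_prob p d n (h + int d - 1)"
  by simp

declare hit_prob.simps(2) [simp del]

definition word_prob :: "real \<Rightarrow> bool list \<Rightarrow> real" where
  "word_prob p bs = (\<Prod>b\<leftarrow>bs. if b then p else 1 - p)"

lemma word_prob_Nil [simp]: "word_prob p [] = 1"
  by (simp add: word_prob_def)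

lemma word_prob_Cons [simp]: "word_prob p (b # bs) = (if b then p else 1 - p) * word_prob p bs"
  by (simp add: word_prob_def)

lemma word_prob_nth: "word_prob p bs = (\<Prod>i<length bs. if bs ! i then p else 1 - p)"
  by (induction bs) (simp_all add: prod.lessThan_Suc_shift del: prod.lessThan_Suc)

lemma word_prob_nonneg: "0 \<le> p \<Longrightarrow> p \<le> 1 \<Longrightarrow> 0 \<le> word_prob p bs"
  by (induction bs) auto

lemma finite_lists_length: "finite {xs :: 'a :: finite list. length xs = n}"
  using finite_lists_length_eq[of "UNIV :: 'a set" n] by simp

lemma sum_bool_lists_length_Suc:
  "(\<Sum>bs | length bs = Suc n. f bs) =
     (\<Sum>bs | length bs = n. f (True # bs)) + (\<Sum>bs | length bs = n. f (False # bs))"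
proof -
  have "{bs. length bs = Suc n} = Cons True ` {bs. length bs = n} \<union> Cons False ` {bs. length bs = n}"
    by (auto simp: length_Suc_conv image_iff)
  then have "(\<Sum>bs | length bs = Suc n. f bs) =
      (\<Sum>bs \<in> Cons True ` {bs. length bs = n}. f bs) + (\<Sum>bs \<in> Cons False ` {bs. length bs = n}. f bs)"
    by (simp only:) (rule sum.union_disjoint; auto simp: finite_lists_length)
  then show ?thesis
    by (simp add: sum.reindex)
qed

lemma sum_word_prob: "(\<Sum>bs | length bs = n. word_prob p bs) = 1"
  by (induction n) (simp_all add: sum_bool_lists_length_Suc sum_distrib_left[symmetric])

lemma hit_prob_eq_sum:
  "hit_prob p d n h = (\<Sum>bs | length bs = n \<and> reaches_negative d h bs. word_prob p bs)"
proof -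
  have "hit_prob p d n h = (\<Sum>bs | length bs = n. if reaches_negative d h bs then word_prob p bs else 0)"
  proof (induction n arbitrary: h)
    case (Suc n)
    show ?case
    proof (cases "h < 0")
      case True
      then show ?thesis
        using sum_word_prob[of p "Suc n"] by (simp add: reaches_negative_if_neg)
    next
      case False
      then show ?thesis
        using Suc.IH[of "h - 1"] Suc.IH[of "h + int d - 1"]
        by (simp add: hit_prob_Suc_nonneg sum_bool_lists_length_Suc sum_distrib_left walk_step_def algebra_simps
            if_distrib[of "\<lambda>x. c * x" for c] cong: if_cong)
    qed
  qed simp
  then show ?thesis
    by (simp add: sum.inter_filter[symmetric] finite_lists_length)
qed

definition ever_hit_prob :: "real \<Rightarrow> nat \<Rightarrow> int \<Rightarrow> real" where
  "ever_hit_prob p d h = (SUP n. hit_prob p d n h)"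

context
  fixes p :: real
  assumes p_nonneg: "0 \<le> p" and p_le_1: "p \<le> 1"
begin

lemma hit_prob_nonneg: "0 \<le> hit_prob p d n h"
  unfolding hit_prob_eq_sum by (intro sum_nonneg word_prob_nonneg p_nonneg p_le_1)

lemma hit_prob_le_1: "hit_prob p d n h \<le> 1"
proof -
  have "hit_prob p d n h \<le> (\<Sum>bs | length bs = n. word_prob p bs)"
    unfolding hit_prob_eq_sum
    by (intro sum_mono2 finite_lists_length word_prob_nonneg p_nonneg p_le_1) auto
  then show ?thesis
    by (simp add: sum_word_prob)
qed

lemma incseq_hit_prob: "incseq (\<lambda>n. hit_prob p d n h)"
proof (rule incseq_SucI)
  show "hit_prob p d n h \<le> hit_prob p d (Suc n) h" for n
  proof (induction n arbitrary: h)
    case 0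
    show ?case using hit_prob_nonneg[of d 1 h] by (cases "h < 0") simp_all
  next
    case (Suc n)
    show ?case
    proof (cases "h < 0")
      case False
      have "(1 - p) * hit_prob p d n (h - 1) + p * hit_prob p d n (h + int d - 1)
          \<le> (1 - p) * hit_prob p d (Suc n) (h - 1) + p * hit_prob p d (Suc n) (h + int d - 1)"
        using Suc.IH p_nonneg p_le_1 by (intro add_mono mult_left_mono) auto
      then show ?thesis
        using False hit_prob_Suc_nonneg[of h p d n] hit_prob_Suc_nonneg[of h p d "Suc n"] by linarith
    qed simp
  qed
qed

lemma hit_prob_antimono: "x \<le> y \<Longrightarrow> hit_prob p d n y \<le> hit_prob p d n x"
proof (induction n arbitrary: x y)
  case (Suc n)
  show ?case
  proof (cases "x < 0")
    case True
    then show ?thesis using hit_prob_le_1[of d "Suc n" y] by simp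
  next
    case False
    have "(1 - p) * hit_prob p d n (y - 1) + p * hit_prob p d n (y + int d - 1)
        \<le> (1 - p) * hit_prob p d n (x - 1) + p * hit_prob p d n (x + int d - 1)"
      using Suc p_nonneg p_le_1 by (intro add_mono mult_left_mono) auto
    then show ?thesis
      using False Suc.prems by (simp add: hit_prob_Suc_nonneg)
  qed
qed auto

lemma hit_prob_mult_le:
  assumes "0 \<le> h"
  shows "hit_prob p d a j * hit_prob p d b h \<le> hit_prob p d (a + b) (j + h + 1)"
proof (induction a arbitrary: j)
  case 0
  show ?case
    using hit_prob_antimono[of "j + h + 1" h d b] hit_prob_nonneg[of d b "j + h + 1"] by simp
next
  case (Suc a)
  show ?case
  proof (cases "j < 0")
    case True
    then show ?thesis
      using hit_prob_antimono[of "j + h + 1" h d b] incseqD[OF incseq_hit_prob, of b "Suc a + b" d "j + h + 1"]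
      by simp
  next
    case False
    have "hit_prob p d (Suc a) j * hit_prob p d b h
        = (1 - p) * (hit_prob p d a (j - 1) * hit_prob p d b h) + p * (hit_prob p d a (j + int d - 1) * hit_prob p d b h)"
      using False by (simp add: hit_prob_Suc_nonneg algebra_simps)
    also have "\<dots> \<le> (1 - p) * hit_prob p d (a + b) (j - 1 + h + 1) + p * hit_prob p d (a + b) (j + int d - 1 + h + 1)"
      using Suc.IH[of "j - 1"] Suc.IH[of "j + int d - 1"] p_nonneg p_le_1
      by (intro add_mono mult_left_mono) simp_all
    also have "\<dots> = hit_prob p d (Suc a + b) (j + h + 1)"
      using False assms by (simp add: hit_prob_Suc_nonneg algebra_simps)
    finally show ?thesis .
  qed
qed

lemma hit_prob_le_power:
  assumes "0 \<le> r" and super: "(1 - p) + p * r ^ d \<le> r"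
  shows "hit_prob p d n h \<le> r ^ nat (h + 1)"
proof (induction n arbitrary: h)
  case (Suc n)
  show ?case
  proof (cases "h < 0")
    case False
    have "hit_prob p d (Suc n) h \<le> (1 - p) * r ^ nat h + p * r ^ (nat h + d)"
      using Suc.IH[of "h - 1"] Suc.IH[of "h + int d - 1"] False p_nonneg p_le_1
      by (simp add: hit_prob_Suc_nonneg nat_diff_distrib' nat_add_distrib add_mono mult_left_mono)
    also have "\<dots> = r ^ nat h * ((1 - p) + p * r ^ d)"
      by (simp add: power_add algebra_simps)
    also have "\<dots> \<le> r ^ nat h * r"
      using super assms by (simp add: mult_left_mono)
    also have "\<dots> = r ^ nat (h + 1)"
      using False by (simp add: nat_add_distrib)
    finally show ?thesis .
  qed simp
qed (simp add: assms)

lemma hit_prob_tendsto_ever: "(\<lambda>n. hit_prob p d n h) \<longlonglongrightarrow> ever_hit_prob p d h"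
  unfolding ever_hit_prob_def
  by (rule LIMSEQ_incseq_SUP[OF _ incseq_hit_prob]) (auto intro: bdd_aboveI2 hit_prob_le_1)

lemma hit_prob_le_ever: "hit_prob p d n h \<le> ever_hit_prob p d h"
  by (rule incseq_le[OF incseq_hit_prob hit_prob_tendsto_ever])

lemma ever_hit_prob_nonneg: "0 \<le> ever_hit_prob p d h"
  using hit_prob_nonneg hit_prob_le_ever by (rule order_trans)

lemma ever_hit_prob_le_1: "ever_hit_prob p d h \<le> 1"
  unfolding ever_hit_prob_def by (rule cSUP_least) (auto intro: hit_prob_le_1)

lemma ever_hit_prob_mult_le:
  assumes "0 \<le> h"
  shows "ever_hit_prob p d j * ever_hit_prob p d h \<le> ever_hit_prob p d (j + h + 1)"
proof (rule LIMSEQ_le_const2)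
  show "(\<lambda>n. hit_prob p d n j * hit_prob p d n h) \<longlonglongrightarrow> ever_hit_prob p d j * ever_hit_prob p d h"
    by (intro tendsto_mult hit_prob_tendsto_ever)
  show "\<exists>N. \<forall>n\<ge>N. hit_prob p d n j * hit_prob p d n h \<le> ever_hit_prob p d (j + h + 1)"
    using order_trans[OF hit_prob_mult_le[OF assms] hit_prob_le_ever] by blast
qed

lemma ever_hit_prob_power_le: "ever_hit_prob p d 0 ^ Suc k \<le> ever_hit_prob p d (int k)"
proof (induction k)
  case (Suc k)
  have "ever_hit_prob p d 0 ^ Suc (Suc k) \<le> ever_hit_prob p d 0 * ever_hit_prob p d (int k)"
    using Suc.IH ever_hit_prob_nonneg by (simp add: mult_left_mono)
  also have "\<dots> \<le> ever_hit_prob p d (int (Suc k))"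
    using ever_hit_prob_mult_le[of "int k" d 0] by (simp add: add.commute)
  finally show ?case .
qed simp

lemma ever_hit_prob_0: "ever_hit_prob p d 0 = (1 - p) + p * ever_hit_prob p d (int d - 1)"
proof (rule LIMSEQ_unique)
  show "(\<lambda>n. hit_prob p d (Suc n) 0) \<longlonglongrightarrow> ever_hit_prob p d 0"
    by (rule LIMSEQ_Suc[OF hit_prob_tendsto_ever])
  have "(\<lambda>n. hit_prob p d (Suc n) 0) = (\<lambda>n. (1 - p) + p * hit_prob p d n (int d - 1))"
    by (simp add: hit_prob_Suc_nonneg)
  then show "(\<lambda>n. hit_prob p d (Suc n) 0) \<longlonglongrightarrow> (1 - p) + p * ever_hit_prob p d (int d - 1)"
    by (simp add: tendsto_intros hit_prob_tendsto_ever)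
qed

lemma ever_hit_prob_0_ge:
  assumes "1 \<le> d"
  shows "(1 - p) + p * ever_hit_prob p d 0 ^ d \<le> ever_hit_prob p d 0"
proof -
  have "ever_hit_prob p d 0 ^ d \<le> ever_hit_prob p d (int d - 1)"
    using ever_hit_prob_power_le[of d "d - 1"] assms by (simp add: of_nat_diff)
  then show ?thesis
    using ever_hit_prob_0[of d] p_nonneg by (simp add: mult_left_mono)
qed

lemma ever_hit_prob_le_power:
  assumes "0 \<le> r" and "(1 - p) + p * r ^ d \<le> r"
  shows "ever_hit_prob p d h \<le> r ^ nat (h + 1)"
  unfolding ever_hit_prob_def by (rule cSUP_least) (auto intro: hit_prob_le_power assms)

end

section \<open>Coin sequences\<close>

definition coin_word :: "(nat \<Rightarrow> 'a \<Rightarrow> real) \<Rightarrow> nat \<Rightarrow> 'a \<Rightarrow> bool list" where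
  "coin_word X n \<omega> = map (\<lambda>k. X k \<omega> = 1) [0..<n]"

lemma length_coin_word [simp]: "length (coin_word X n \<omega>) = n"
  by (simp add: coin_word_def)

lemma walk_step_coin:
  "x = 0 \<or> x = 1 \<Longrightarrow> real_of_int (walk_step d (x = 1)) = real d * x - 1"
  by (auto simp: walk_step_def)

lemma coin_word_preimage:
  "{\<omega> \<in> S. Q (coin_word X n \<omega>)} = (\<Union>bs \<in> {bs. length bs = n \<and> Q bs}. {\<omega> \<in> S. coin_word X n \<omega> = bs})"
  by auto

context prob_space
begin

lemma indep_vars_measurable: "indep_vars M' X I \<Longrightarrow> i \<in> I \<Longrightarrow> X i \<in> measurable M (M' i)"
  unfolding indep_vars_def by blast

lemma coin_word_eq_event:
  assumes "\<And>k. X k \<in> borel_measurable M"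
  shows "{\<omega> \<in> space M. coin_word X n \<omega> = bs} \<in> events"
proof -
  have "{\<omega> \<in> space M. coin_word X n \<omega> = bs} =
      {\<omega> \<in> space M. length bs = n \<and> (\<forall>i<n. (X i \<omega> = 1) = bs ! i)}"
    by (auto simp: coin_word_def list_eq_iff_nth_eq)
  also have "\<dots> \<in> events"
    using assms by measurable
  finally show ?thesis .
qed

lemma coin_word_event:
  assumes "\<And>k. X k \<in> borel_measurable M"
  shows "{\<omega> \<in> space M. Q (coin_word X n \<omega>)} \<in> events"
  unfolding coin_word_preimage
  using assms by (intro sets.finite_UN coin_word_eq_event) (auto simp: finite_lists_length)

lemma prob_coin_word_eq:
  assumes indep: "indep_vars (\<lambda>_. borel) X UNIV"
    and p: "\<And>k. prob {\<omega> \<in> space M. X k \<omega> = 1} = p"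
    and len: "length bs = n"
  shows "prob {\<omega> \<in> space M. coin_word X n \<omega> = bs} = word_prob p bs"
proof (cases "n = 0")
  case True
  then show ?thesis
    using len by (simp add: coin_word_def prob_space)
next
  case False
  have rv[measurable]: "X i \<in> borel_measurable M" for i
    using indep_vars_measurable[OF indep] by simp
  define B where "B i = X i -` (if bs ! i then {1} else - {1}) \<inter> space M" for i
  have B_iff: "\<omega> \<in> B i \<longleftrightarrow> \<omega> \<in> space M \<and> (X i \<omega> = 1) = bs ! i" for \<omega> i
    by (auto simp: B_def)
  have "coin_word X n \<omega> = bs \<longleftrightarrow> (\<forall>i<n. (X i \<omega> = 1) = bs ! i)" for \<omega>
    using len by (auto simp: coin_word_def list_eq_iff_nth_eq)
  then have "prob {\<omega> \<in> space M. coin_word X n \<omega> = bs} = prob (\<Inter>i<n. B i)"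
    using False by (auto simp: B_iff intro: arg_cong[where f = prob])
  also have "\<dots> = (\<Prod>i<n. prob (B i))"
  proof (rule indep_setsD)
    show "indep_sets (\<lambda>i. {X i -` A \<inter> space M | A. A \<in> sets borel}) UNIV"
      using indep unfolding indep_vars_def2 by blast
    show "\<forall>i\<in>{..<n}. B i \<in> {X i -` A \<inter> space M | A. A \<in> sets borel}"
      unfolding B_def by (auto intro!: exI[of _ "if bs ! i then {1} else - {1}" for i])
  qed (use False in auto)
  also have "\<dots> = (\<Prod>i<n. if bs ! i then p else 1 - p)"
  proof (rule prod.cong)
    show "prob (B i) = (if bs ! i then p else 1 - p)" for i
    proof (cases "bs ! i")
      case True
      then have "B i = {\<omega> \<in> space M. X i \<omega> = 1}"
        by (auto simp: B_iff)
      then show ?thesis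
        using True p[of i] by simp
    next
      case False
      then have "B i = space M - {\<omega> \<in> space M. X i \<omega> = 1}"
        by (auto simp: B_iff)
      then show ?thesis
        using False p[of i] by (simp add: prob_compl)
    qed
  qed simp
  also have "\<dots> = word_prob p bs"
    using len by (simp add: word_prob_nth)
  finally show ?thesis .
qed

lemma prob_coin_word:
  assumes indep: "indep_vars (\<lambda>_. borel) X UNIV"
    and p: "\<And>k. prob {\<omega> \<in> space M. X k \<omega> = 1} = p"
  shows "prob {\<omega> \<in> space M. Q (coin_word X n \<omega>)} = (\<Sum>bs | length bs = n \<and> Q bs. word_prob p bs)"
proof -
  have rv: "X i \<in> borel_measurable M" for i
    using indep_vars_measurable[OF indep] by simp
  have "prob {\<omega> \<in> space M. Q (coin_word X n \<omega>)} =
      (\<Sum>bs | length bs = n \<and> Q bs. prob {\<omega> \<in> space M. coin_word X n \<omega> = bs})"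
    unfolding coin_word_preimage
    by (rule finite_measure_finite_Union)
      (auto simp: finite_lists_length coin_word_eq_event rv disjoint_family_on_def)
  also have "\<dots> = (\<Sum>bs | length bs = n \<and> Q bs. word_prob p bs)"
    using prob_coin_word_eq[OF indep p] by (intro sum.cong) auto
  finally show ?thesis .
qed

lemma prob_crossing_within_eq_hit_prob:
  assumes indep: "indep_vars (\<lambda>_. borel) X UNIV" and "1 \<le> d"
    and p1: "\<And>k. prob {\<omega> \<in> space M. X k \<omega> = 1} = p"
    and p0: "\<And>k. prob {\<omega> \<in> space M. X k \<omega> = 0} = 1 - p"
  shows "prob {\<omega> \<in> space M. \<exists>N\<le>n. (\<Sum>k<N. X k \<omega>) < real N / real d} = hit_prob p d n 0"
proof -
  have rv[measurable]: "X k \<in> borel_measurable M" for k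
    using indep_vars_measurable[OF indep] by simp
  have "AE \<omega> in M. X k \<omega> = 0 \<or> X k \<omega> = 1" for k
  proof -
    have "prob ({\<omega> \<in> space M. X k \<omega> = 0} \<union> {\<omega> \<in> space M. X k \<omega> = 1}) = 1"
      using p0[of k] p1[of k] by (subst finite_measure_Union) auto
    from AE_prob_1[OF this] show ?thesis
      by eventually_elim auto
  qed
  then have coins: "AE \<omega> in M. \<forall>k. X k \<omega> = 0 \<or> X k \<omega> = 1"
    by (simp add: AE_all_countable)
  have "prob {\<omega> \<in> space M. \<exists>N\<le>n. (\<Sum>k<N. X k \<omega>) < real N / real d}
      = prob {\<omega> \<in> space M. reaches_negative d 0 (coin_word X n \<omega>)}"
  proof (rule finite_measure_eq_AE)
    show "AE \<omega> in M. \<omega> \<in> {\<omega> \<in> space M. \<exists>N\<le>n. (\<Sum>k<N. X k \<omega>) < real N / real d} \<longleftrightarrow>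
        \<omega> \<in> {\<omega> \<in> space M. reaches_negative d 0 (coin_word X n \<omega>)}"
      using coins
    proof eventually_elim
      case (elim \<omega>)
      have "(\<Sum>k<N. X k \<omega>) < real N / real d \<longleftrightarrow> 0 + (\<Sum>k<N. walk_step d (coin_word X n \<omega> ! k)) < 0"
        if "N \<le> n" for N
      proof -
        have "real_of_int (\<Sum>k<N. walk_step d (coin_word X n \<omega> ! k)) = real d * (\<Sum>k<N. X k \<omega>) - real N"
          using that elim walk_step_coin
          by (simp add: coin_word_def sum_subtractf sum_distrib_left)
        moreover have "(\<Sum>k<N. X k \<omega>) < real N / real d \<longleftrightarrow> real d * (\<Sum>k<N. X k \<omega>) < real N"
          using assms(2) by (simp add: pos_less_divide_eq mult.commute)
        ultimately show ?thesis
          by linarith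
      qed
      then show ?case
        by (auto simp: reaches_negative_def)
    qed
  qed (use rv coin_word_event in auto)
  also have "\<dots> = hit_prob p d n 0"
    by (simp add: prob_coin_word[OF indep p1] hit_prob_eq_sum)
  finally show ?thesis .
qed

lemma prob_crossing_eq_ever_hit_prob:
  assumes indep: "indep_vars (\<lambda>_. borel) X UNIV" and "1 \<le> d"
    and p1: "\<And>k. prob {\<omega> \<in> space M. X k \<omega> = 1} = p"
    and p0: "\<And>k. prob {\<omega> \<in> space M. X k \<omega> = 0} = 1 - p"
  shows "prob {\<omega> \<in> space M. \<exists>N>0. (\<Sum>k<N. X k \<omega>) < real N / real d} = ever_hit_prob p d 0"
proof (rule LIMSEQ_unique)
  have rv[measurable]: "X k \<in> borel_measurable M" for k
    using indep_vars_measurable[OF indep] by simp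
  define E where "E n = {\<omega> \<in> space M. \<exists>N\<le>n. (\<Sum>k<N. X k \<omega>) < real N / real d}" for n
  have N_pos: "0 < N" if "(\<Sum>k<N. X k \<omega>) < real N / real d" for N \<omega>
    using that by (cases N) auto
  have "(\<Union>n. E n) = {\<omega> \<in> space M. \<exists>N>0. (\<Sum>k<N. X k \<omega>) < real N / real d}"
    using N_pos by (auto simp: E_def)
  moreover have "incseq E"
    unfolding incseq_def E_def by (auto; meson order_trans)
  then have "(\<lambda>n. prob (E n)) \<longlonglongrightarrow> prob (\<Union>n. E n)"
    by (intro finite_Lim_measure_incseq) (auto simp: E_def[abs_def])
  ultimately show "(\<lambda>n. prob (E n)) \<longlonglongrightarrow> prob {\<omega> \<in> space M. \<exists>N>0. (\<Sum>k<N. X k \<omega>) < real N / real d}"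
    by simp
  have "0 \<le> p" "p \<le> 1"
    using p1[of 0] by auto
  then show "(\<lambda>n. prob (E n)) \<longlonglongrightarrow> ever_hit_prob p d 0"
    unfolding E_def prob_crossing_within_eq_hit_prob[OF assms] by (rule hit_prob_tendsto_ever)
qed

end

section \<open>The roots of \<open>z ^ d - 4 z + 3\<close>\<close>

lemma trinomial_factor:
  "(z :: 'a :: comm_ring_1) ^ d - 4 * z + 3 = (z - 1) * ((\<Sum>i<d. z ^ i) - 4)"
  using one_diff_power_eq[of z d] by (simp add: algebra_simps)

lemma sum_powers_strict_mono:
  fixes x y :: "'a :: linordered_semidom"
  assumes "1 < d" "0 \<le> x" "x < y"
  shows "(\<Sum>i<d. x ^ i) < (\<Sum>i<d. y ^ i)"
proof (rule sum_strict_mono_ex1)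
  show "\<forall>i\<in>{..<d}. x ^ i \<le> y ^ i"
    using assms by (auto intro: power_mono)
  show "\<exists>i\<in>{..<d}. x ^ i < y ^ i"
    using assms by (intro bexI[of _ 1]) auto
qed simp

lemma trinomial_pos:
  fixes t :: real
  assumes "d \<le> 4" "0 \<le> t" "t < 1"
  shows "0 < t ^ d - 4 * t + 3"
proof -
  have "(\<Sum>i<d. t ^ i) \<le> (\<Sum>i<4. t ^ i)"
    using assms by (intro sum_mono2) auto
  also have "\<dots> < (\<Sum>i<4. 1 ^ i)"
    using assms by (intro sum_powers_strict_mono) auto
  finally show ?thesis
    using assms(3) by (simp add: trinomial_factor mult_neg_neg)
qed

lemma sum_powers_eq_4:
  assumes "4 < d"
  obtains r :: real where "3/4 < r" "r < 1" "(\<Sum>i<d. r ^ i) = 4"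
proof -
  define S where "S t = (\<Sum>i<d. t ^ i)" for t :: real
  have "S (3/4) = 4 * (1 - (3/4) ^ d)"
    using one_diff_power_eq[of "3/4::real" d] by (simp add: S_def)
  then have S_lower: "S (3/4) < 4"
    by simp
  have S_upper: "4 < S 1"
    using assms by (simp add: S_def)
  have "continuous_on {3/4..1} S"
    unfolding S_def by (intro continuous_intros)
  then obtain r where "3/4 \<le> r" "r \<le> 1" "S r = 4"
    using IVT'[of S "3/4" 4 1] S_lower S_upper by auto
  moreover have "r \<noteq> 3/4" "r \<noteq> 1"
    using S_lower S_upper \<open>S r = 4\<close> by (metis less_irrefl)+
  ultimately have "3/4 < r" "r < 1" "S r = 4"
    by auto
  then show ?thesis
    using that unfolding S_def by blast
qed

context
  fixes d :: nat and r :: real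
  assumes d: "4 < d" and r: "0 \<le> r" "(\<Sum>i<d. r ^ i) = 4"
begin

lemma trinomial_nonpos_iff:
  assumes "0 \<le> t" "t < 1"
  shows "t ^ d - 4 * t + 3 \<le> 0 \<longleftrightarrow> r \<le> t"
    and "0 \<le> t ^ d - 4 * t + 3 \<longleftrightarrow> t \<le> r"
proof -
  have mono: "(\<Sum>i<d. x ^ i) < (\<Sum>i<d. y ^ i)" if "0 \<le> x" "x < y" for x y :: real
    using sum_powers_strict_mono[of d x y] d that by simp
  have "t ^ d - 4 * t + 3 \<le> 0 \<longleftrightarrow> 4 \<le> (\<Sum>i<d. t ^ i)"
    using assms by (simp add: trinomial_factor mult_le_0_iff)
  also have "\<dots> \<longleftrightarrow> r \<le> t"
    using mono[of t r] mono[of r t] r assms by (cases t r rule: linorder_cases) auto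
  finally show "t ^ d - 4 * t + 3 \<le> 0 \<longleftrightarrow> r \<le> t" .
  have "0 \<le> t ^ d - 4 * t + 3 \<longleftrightarrow> (\<Sum>i<d. t ^ i) \<le> 4"
    using assms by (simp add: trinomial_factor zero_le_mult_iff)
  also have "\<dots> \<longleftrightarrow> t \<le> r"
    using mono[of t r] mono[of r t] r assms by (cases t r rule: linorder_cases) auto
  finally show "0 \<le> t ^ d - 4 * t + 3 \<longleftrightarrow> t \<le> r" .
qed

lemma norm_trinomial_root_le:
  fixes z :: complex
  assumes "cmod z < 1" "z ^ d - 4 * z + 3 = 0"
  shows "cmod z \<le> r"
proof -
  have "4 * cmod z = cmod (z ^ d + 3)"
  proof -
    have "z ^ d + 3 = 4 * z"
      using assms(2) by (simp add: algebra_simps)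
    then show ?thesis
      by (simp add: norm_mult)
  qed
  also have "\<dots> \<le> cmod z ^ d + 3"
    using norm_triangle_ineq[of "z ^ d" 3] by (simp add: norm_power)
  finally show ?thesis
    using trinomial_nonpos_iff(2)[of "cmod z"] assms(1) by simp
qed

lemma mult_power_pred_lt_4:
  assumes "r < 1"
  shows "real d * r ^ (d - 1) < 4"
proof -
  have "(\<Sum>i<d. r ^ (d - 1)) < (\<Sum>i<d. r ^ i)"
  proof (rule sum_strict_mono_ex1)
    show "\<forall>i\<in>{..<d}. r ^ (d - 1) \<le> r ^ i"
      using r(1) assms by (auto intro: power_decreasing)
    show "\<exists>i\<in>{..<d}. r ^ (d - 1) < r ^ i"
      using r(1) assms d by (intro bexI[of _ 0]) (auto simp: power_less_one_iff)
  qed simp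
  then show ?thesis
    using r(2) by simp
qed

lemma trinomial_roots_in_unit_disk:
  assumes "r < 1"
  shows "{z :: complex. cmod z < 1 \<and> z ^ d - 4 * z + 3 = 0} = {of_real r}"
proof -
  have r_root: "(complex_of_real r) ^ d - 4 * of_real r + 3 = 0"
    using trinomial_factor[of "complex_of_real r" d] r by (simp flip: of_real_power of_real_sum)
  have "z = of_real r" if z: "cmod z < 1" "z ^ d - 4 * z + 3 = 0" for z :: complex
  proof (rule ccontr)
    assume ne: "z \<noteq> of_real r"
    define Q where "Q = (\<Sum>i<d. of_real r ^ (d - Suc i) * z ^ i)"
    have "(z - of_real r) * Q = z ^ d - of_real r ^ d"
      unfolding Q_def by (rule power_diff_sumr2[symmetric])
    also have "\<dots> = (z ^ d - 4 * z + 3) - (of_real r ^ d - 4 * of_real r + 3) + 4 * (z - of_real r)"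
      by (simp add: algebra_simps)
    also have "\<dots> = 4 * (z - of_real r)"
      using z(2) r_root by simp
    finally have "(z - of_real r) * (Q - 4) = 0"
      by (simp add: algebra_simps)
    then have "Q = 4"
      using ne by simp
    have "cmod Q \<le> (\<Sum>i<d. r ^ (d - Suc i) * cmod z ^ i)"
      unfolding Q_def using norm_sum[of "\<lambda>i. of_real r ^ (d - Suc i) * z ^ i" "{..<d}"] r(1)
      by (simp add: norm_mult norm_power)
    also have "\<dots> \<le> (\<Sum>i<d. r ^ (d - Suc i) * r ^ i)"
      using norm_trinomial_root_le[OF z] r(1) by (intro sum_mono mult_left_mono power_mono) auto
    also have "\<dots> = real d * r ^ (d - 1)"
      by (simp add: power_add[symmetric])
    also have "\<dots> < 4"
      using assms by (rule mult_power_pred_lt_4)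
    finally show False
      using \<open>Q = 4\<close> by simp
  qed
  then show ?thesis
    using r_root assms r(1) by auto
qed

end

theorem mainTheorem11:
  fixes M :: "'a measure" and X :: "nat \<Rightarrow> 'a \<Rightarrow> real" and d :: nat
  assumes "prob_space M"
    and "d \<ge> 1"
    and "prob_space.indep_vars M (\<lambda>_. borel) X UNIV"
    and "\<And>k. measure M {\<omega> \<in> space M. X k \<omega> = 1} = 1/4"
    and "\<And>k. measure M {\<omega> \<in> space M. X k \<omega> = 0} = 3/4"
  defines "P \<equiv> measure M {\<omega> \<in> space M. \<exists>N::nat. N > 0 \<and>
                 (\<Sum>k<N. X k \<omega>) < real N / real d}"
  shows "(d \<le> 4 \<longrightarrow> P = 1) \<and>
         (d > 4 \<longrightarrow> (\<exists>r::real. 3/4 < r \<and> r < 1 \<and>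
             {z::complex. cmod z < 1 \<and> z ^ d - 4 * z + 3 = 0} = {complex_of_real r} \<and>
             P = r))"
proof -
  interpret prob_space M by fact
  have P: "P = ever_hit_prob (1/4) d 0"
    unfolding P_def using prob_crossing_eq_ever_hit_prob[OF assms(3,2,4)] assms(5) by simp
  have P_01: "0 \<le> P" "P \<le> 1"
    unfolding P by (simp_all add: ever_hit_prob_nonneg ever_hit_prob_le_1)
  have P_nonpos: "P ^ d - 4 * P + 3 \<le> 0"
    using ever_hit_prob_0_ge[of "1/4" d] assms(2) unfolding P by simp
  have P_least: "P \<le> r" if "0 \<le> r" "r ^ d - 4 * r + 3 = 0" for r
    using ever_hit_prob_le_power[of "1/4" r d 0] that unfolding P by simp
  show ?thesis
  proof (intro conjI impI)
    assume "d \<le> 4"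
    then show "P = 1"
      using trinomial_pos[of d P] P_01 P_nonpos by (cases "P < 1") auto
  next
    assume d: "4 < d"
    obtain r :: real where r: "3/4 < r" "r < 1" "(\<Sum>i<d. r ^ i) = 4"
      using d by (rule sum_powers_eq_4)
    have r_nonneg: "0 \<le> r"
      using r(1) by simp
    have "r \<le> P"
      using trinomial_nonpos_iff(1)[OF d r_nonneg r(3) P_01(1)] r(2) P_01 P_nonpos
      by (cases "P < 1") auto
    moreover have "P \<le> r"
      using P_least[OF r_nonneg] trinomial_factor[of r d] r(3) by simp
    ultimately show "\<exists>r. 3/4 < r \<and> r < 1 \<and>
        {z::complex. cmod z < 1 \<and> z ^ d - 4 * z + 3 = 0} = {complex_of_real r} \<and> P = r"
      using r trinomial_roots_in_unit_disk[OF d r_nonneg r(3) r(2)] by auto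
  qed
qed

end
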